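(* Let $f(x)$ be a complex-valued function of a real variable defined to the right of $0$, and let $g(x)=f(1/\log x)$, defined in a neighbourhood of $\infty$ (equivalently, let $g$ be any complex-valued function defined in a neighbourhood of $\infty$ and $f(x)=g(e^{1/x})$ for $x>0$ small). Let $a_n\in\mathbb C$ for $n\ge0$, let $N$ be a positive integer, and let $L(x)$ be any function with $L(x)=\log x+o\big((\log x)^{-(N-2)}\big)$ $(x\to\infty)$. Then the following asymptotic expansions (each with terms $n=0,\dots,N$, i.e. of order $N+1$) are equivalent: (1) $f(x)\sim\sum_{n=0}^N a_nx^n$ $(x\to0^+)$; (2) $f(1/x)=g(e^x)\sim\sum_{n=0}^N\frac{a_n}{x^n}$ $(x\to\infty)$; (3) $g(x)\sim\sum_{n=0}^N\frac{a_n}{L(x)^n}$ $(x\to\infty)$; (4) $g(x)\sim\sum_{n=0}^N\frac{a_n}{(\log x)^n}$ $(x\to\infty)$; (5) $g(x)\sim\sum_{n=0}^N\frac{a_n}{(H_x-\gamma)^n}$ $(x\to\infty)$; (6) $g(x)\sim\sum_{n=0}^N\frac{a_n}{\Psi(x)^n}$ $(x\to\infty)$.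
   Context: $\gamma$ is the Euler–Mascheroni constant, $\Psi=\Gamma'/\Gamma$ is the digamma function, and $H_x=\Psi(x+1)+\gamma=\int_0^1\frac{1-t^x}{1-t}dt$ for real $x>0$ (interpolating the harmonic numbers). An asymptotic expansion $h\sim\sum_{n=0}^N a_n\varphi_n$ of order $N+1$ with respect to an asymptotic sequence $\{\varphi_n\}$ (i.e. $\varphi_{n+1}=o(\varphi_n)$) means $h-\sum_{k=0}^n a_k\varphi_k=o(\varphi_n)$ for all $n\le N$ (equivalently for $n=N$). *)

theory Defs
  imports "HOL-Analysis.Analysis" "HOL-Library.Landau_Symbols"
begin

definition asymp_expansion ::
  "'a filter \<Rightarrow> ('a \<Rightarrow> complex) \<Rightarrow> (nat \<Rightarrow> complex) \<Rightarrow> (nat \<Rightarrow> 'a \<Rightarrow> complex) \<Rightarrow> nat \<Rightarrow> bool" where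
  "asymp_expansion F h a \<phi> N \<longleftrightarrow>
     (\<forall>n\<le>N. (\<lambda>x. h x - (\<Sum>k\<le>n. a k * \<phi> k x)) \<in> o[F](\<phi> n))"

definition harm_real :: "real \<Rightarrow> real" where
  "harm_real x = Digamma (x + 1) + euler_mascheroni"

end

theory Submission imports Defs "HOL-Real_Asymp.Real_Asymp" begin

(* (1) and (2) differ by the substitution x = 1/t, and (2) and (4) by x = e^t. Every other scale
   M(x) is compared with ln x: if M - ln x = o((ln x)^(2-N)), then
   1/M - 1/ln x = (ln x - M)/(M ln x) = o((ln x)^(-N)) and hence 1/M^k - 1/(ln x)^k = o((ln x)^(-N))
   for every k, so replacing the terms 1/(ln x)^k by 1/M^k changes no remainder of order at most N.
   Both Psi(x) and H_x - gamma = Psi(x+1) differ from ln x by O(1/x): Psi is increasing, and at the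
   integers the bounds for the Euler-Mascheroni constant pin Psi(n) = H_(n-1) - gamma to ln n. *)

lemma asymp_expansion_cong:
  assumes "eventually (\<lambda>x. h x = h' x) F"
  shows "asymp_expansion F h a \<phi> N \<longleftrightarrow> asymp_expansion F h' a \<phi> N"
  unfolding asymp_expansion_def
proof (intro all_cong imp_cong refl landau_o.small.in_cong)
  show "eventually (\<lambda>x. h x - (\<Sum>k\<le>n. a k * \<phi> k x) = h' x - (\<Sum>k\<le>n. a k * \<phi> k x)) F" for n
    using assms by eventually_elim simp
qed

lemma asymp_expansion_filtermap:
  "asymp_expansion (filtermap m F) h a \<phi> N \<longleftrightarrow>
   asymp_expansion F (\<lambda>x. h (m x)) a (\<lambda>n x. \<phi> n (m x)) N"
  unfolding asymp_expansion_def landau_o.small.in_filtermap_iff by simp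

lemma asymp_expansion_change_scale:
  fixes \<phi> \<psi> :: "nat \<Rightarrow> 'a \<Rightarrow> complex"
  assumes equiv: "\<And>n. n \<le> N \<Longrightarrow> \<phi> n \<in> \<Theta>[F](\<psi> n)"
    and close: "\<And>k n. k \<le> n \<Longrightarrow> n \<le> N \<Longrightarrow> (\<lambda>x. \<phi> k x - \<psi> k x) \<in> o[F](\<psi> n)"
    and expansion: "asymp_expansion F h a \<phi> N"
  shows "asymp_expansion F h a \<psi> N"
  unfolding asymp_expansion_def
proof (intro allI impI)
  fix n assume n: "n \<le> N"
  have rest: "(\<lambda>x. h x - (\<Sum>k\<le>n. a k * \<phi> k x)) \<in> o[F](\<psi> n)"
    using expansion n equiv[OF n] unfolding asymp_expansion_def
    using landau_o.small.cong_bigtheta by blast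
  have "(\<lambda>x. a k * (\<phi> k x - \<psi> k x)) \<in> o[F](\<psi> n)" if "k \<le> n" for k
    using close[OF that n] by (cases "a k = 0") simp_all
  then have scale_error: "(\<lambda>x. \<Sum>k\<le>n. a k * (\<phi> k x - \<psi> k x)) \<in> o[F](\<psi> n)"
    by (intro big_sum_in_smallo) simp
  have "(\<lambda>x. h x - (\<Sum>k\<le>n. a k * \<psi> k x)) =
        (\<lambda>x. (h x - (\<Sum>k\<le>n. a k * \<phi> k x)) + (\<Sum>k\<le>n. a k * (\<phi> k x - \<psi> k x)))"
    by (simp add: algebra_simps sum_subtractf)
  then show "(\<lambda>x. h x - (\<Sum>k\<le>n. a k * \<psi> k x)) \<in> o[F](\<psi> n)"
    using sum_in_smallo(1)[OF rest scale_error] by simp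
qed

lemma asymp_expansion_change_scale_iff:
  fixes \<phi> \<psi> :: "nat \<Rightarrow> 'a \<Rightarrow> complex"
  assumes equiv: "\<And>n. n \<le> N \<Longrightarrow> \<phi> n \<in> \<Theta>[F](\<psi> n)"
    and close: "\<And>k n. k \<le> n \<Longrightarrow> n \<le> N \<Longrightarrow> (\<lambda>x. \<phi> k x - \<psi> k x) \<in> o[F](\<psi> n)"
  shows "asymp_expansion F h a \<phi> N \<longleftrightarrow> asymp_expansion F h a \<psi> N"
proof
  show "asymp_expansion F h a \<phi> N \<Longrightarrow> asymp_expansion F h a \<psi> N"
    using asymp_expansion_change_scale equiv close by blast
next
  have "(\<lambda>x. \<psi> k x - \<phi> k x) \<in> o[F](\<phi> n)" if "k \<le> n" "n \<le> N" for k n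
  proof -
    have "(\<lambda>x. - (\<phi> k x - \<psi> k x)) \<in> o[F](\<psi> n)"
      using close[OF that] by (simp only: landau_o.small.uminus_in_iff)
    then show ?thesis
      using landau_o.small.cong_bigtheta[OF equiv[OF that(2)]] by simp
  qed
  then show "asymp_expansion F h a \<psi> N \<Longrightarrow> asymp_expansion F h a \<phi> N"
    using asymp_expansion_change_scale[of N \<psi> F \<phi>] equiv bigtheta_sym by blast
qed

lemma asymp_equiv_of_diff_smallo_powr:
  fixes M l :: "'a \<Rightarrow> real"
  assumes l: "filterlim l at_top F" and N: "N > 0"
    and close: "(\<lambda>x. M x - l x) \<in> o[F](\<lambda>x. l x powr (2 - real N))"
  shows "M \<sim>[F] l"
proof (rule smallo_imp_asymp_equiv)
  have "eventually (\<lambda>x. l x \<ge> 1) F"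
    using l by (simp add: filterlim_at_top)
  then have "eventually (\<lambda>x. norm (l x powr (2 - real N)) \<le> 1 * norm (l x)) F"
  proof eventually_elim
    case (elim x)
    have "l x powr (2 - real N) \<le> l x powr 1"
      using elim N by (intro powr_mono) auto
    then show ?case using elim by simp
  qed
  then have "(\<lambda>x. l x powr (2 - real N)) \<in> O[F](l)"
    by (intro bigoI)
  then show "(\<lambda>x. M x - l x) \<in> o[F](l)"
    using landau_o.small_big_trans[OF close] by blast
qed

lemma inverse_diff_smallo_of_diff_smallo_powr:
  fixes M l :: "'a \<Rightarrow> real"
  assumes l: "filterlim l at_top F" and N: "N > 0"
    and close: "(\<lambda>x. M x - l x) \<in> o[F](\<lambda>x. l x powr (2 - real N))"
  shows "(\<lambda>x. 1 / M x - 1 / l x) \<in> o[F](\<lambda>x. 1 / l x ^ N)"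
proof -
  have equiv: "M \<sim>[F] l"
    using asymp_equiv_of_diff_smallo_powr[OF l N close] .
  have "filterlim M at_top F"
    using asymp_equiv_at_top_transfer[OF asymp_equiv_symI[OF equiv] l] .
  then have M_pos: "eventually (\<lambda>x. M x > 0) F"
    by (simp add: filterlim_at_top_dense)
  have l_pos: "eventually (\<lambda>x. l x > 0) F"
    using l by (simp add: filterlim_at_top_dense)
  have "(\<lambda>x. l x - M x) \<in> o[F](\<lambda>x. l x powr (2 - real N))"
    using close by (subst landau_o.small.uminus_in_iff[symmetric]) simp
  moreover have "(\<lambda>x. 1 / (M x * l x)) \<in> O[F](\<lambda>x. 1 / (l x * l x))"
    by (intro asymp_equiv_imp_bigo asymp_equiv_intros equiv)
  ultimately have product: "(\<lambda>x. (l x - M x) * (1 / (M x * l x))) \<in>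
      o[F](\<lambda>x. l x powr (2 - real N) * (1 / (l x * l x)))"
    by (rule landau_o.small_big_mult)
  have lhs: "eventually (\<lambda>x. (l x - M x) * (1 / (M x * l x)) = 1 / M x - 1 / l x) F"
    using M_pos l_pos by eventually_elim (simp add: field_simps)
  have rhs: "eventually (\<lambda>x. l x powr (2 - real N) * (1 / (l x * l x)) = 1 / l x ^ N) F"
    using l_pos by eventually_elim (simp add: powr_diff powr_realpow power2_eq_square)
  show ?thesis
    using product landau_o.small.cong_ex[OF lhs rhs] by simp
qed

lemma inverse_power_diff_smallo_of_diff_smallo_powr:
  fixes M l :: "'a \<Rightarrow> real"
  assumes l: "filterlim l at_top F" and N: "N > 0"
    and close: "(\<lambda>x. M x - l x) \<in> o[F](\<lambda>x. l x powr (2 - real N))"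
  shows "(\<lambda>x. 1 / M x ^ k - 1 / l x ^ k) \<in> o[F](\<lambda>x. 1 / l x ^ N)"
proof (induction k)
  case 0
  then show ?case by simp
next
  case (Suc k)
  have "filterlim M at_top F"
    using asymp_equiv_at_top_transfer[OF asymp_equiv_symI l]
      asymp_equiv_of_diff_smallo_powr[OF l N close] by blast
  then have M_inverse_bounded: "(\<lambda>x. 1 / M x) \<in> O[F](\<lambda>_. 1)"
    by (intro bigoI_tendsto[where c = 0])
      (simp_all add: tendsto_inverse_0_at_top flip: inverse_eq_divide)
  have "eventually (\<lambda>x. l x \<ge> 1) F"
    using l by (simp add: filterlim_at_top)
  then have "eventually (\<lambda>x. norm (1 / l x ^ k) \<le> 1 * norm (1::real)) F"
    by eventually_elim (simp add: divide_le_eq_1 one_le_power)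
  then have l_inverse_power_bounded: "(\<lambda>x. 1 / l x ^ k) \<in> O[F](\<lambda>_. 1)"
    by (intro bigoI)
  have "(\<lambda>x. 1 / M x * (1 / M x ^ k - 1 / l x ^ k) + 1 / l x ^ k * (1 / M x - 1 / l x))
      \<in> o[F](\<lambda>x. 1 * (1 / l x ^ N))"
    using landau_o.big_small_mult[OF M_inverse_bounded Suc.IH]
      landau_o.big_small_mult[OF l_inverse_power_bounded
        inverse_diff_smallo_of_diff_smallo_powr[OF l N close]]
    by (rule sum_in_smallo)
  also have "(\<lambda>x. 1 / M x * (1 / M x ^ k - 1 / l x ^ k) + 1 / l x ^ k * (1 / M x - 1 / l x)) =
      (\<lambda>x. 1 / M x ^ Suc k - 1 / l x ^ Suc k)"
    by (simp add: algebra_simps)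
  finally show ?case
    by simp
qed

lemma asymp_expansion_inverse_powers_iff:
  fixes M l :: "'a \<Rightarrow> real"
  assumes l: "filterlim l at_top F" and N: "N > 0"
    and close: "(\<lambda>x. M x - l x) \<in> o[F](\<lambda>x. l x powr (2 - real N))"
  shows "asymp_expansion F h a (\<lambda>n x. complex_of_real (1 / M x ^ n)) N \<longleftrightarrow>
         asymp_expansion F h a (\<lambda>n x. complex_of_real (1 / l x ^ n)) N"
proof (rule asymp_expansion_change_scale_iff)
  fix n
  have "(\<lambda>x. 1 / M x ^ n) \<sim>[F] (\<lambda>x. 1 / l x ^ n)"
    by (intro asymp_equiv_intros asymp_equiv_of_diff_smallo_powr[OF l N close])
  then show "(\<lambda>x. complex_of_real (1 / M x ^ n)) \<in> \<Theta>[F](\<lambda>x. complex_of_real (1 / l x ^ n))"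
    unfolding landau_theta.of_real_iff by (rule asymp_equiv_imp_bigtheta)
next
  fix k n :: nat
  assume "k \<le> n" "n \<le> N"
  have "eventually (\<lambda>x. l x \<ge> 1) F"
    using l by (simp add: filterlim_at_top)
  then have "eventually (\<lambda>x. norm (1 / l x ^ N) \<le> 1 * norm (1 / l x ^ n)) F"
  proof eventually_elim
    case (elim x)
    have "l x ^ n \<le> l x ^ N"
      using elim \<open>n \<le> N\<close> by (intro power_increasing) auto
    then show ?case
      using elim by (simp add: frac_le)
  qed
  then have "(\<lambda>x. 1 / l x ^ N) \<in> O[F](\<lambda>x. 1 / l x ^ n)"
    by (intro bigoI)
  with inverse_power_diff_smallo_of_diff_smallo_powr[OF l N close]
  have "(\<lambda>x. 1 / M x ^ k - 1 / l x ^ k) \<in> o[F](\<lambda>x. 1 / l x ^ n)"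
    by (rule landau_o.small_big_trans)
  then have "(\<lambda>x. complex_of_real (1 / M x ^ k - 1 / l x ^ k))
      \<in> o[F](\<lambda>x. complex_of_real (1 / l x ^ n))"
    by (simp only: landau_o.small.of_real_iff)
  then show "(\<lambda>x. complex_of_real (1 / M x ^ k) - complex_of_real (1 / l x ^ k))
      \<in> o[F](\<lambda>x. complex_of_real (1 / l x ^ n))"
    by (simp only: of_real_diff)
qed

lemma Digamma_nat_plus_two_bounds:
  "ln (real n + 2) - 1 / (2 * (real n + 1)) \<le> Digamma (real n + 2)"
  "Digamma (real n + 2) \<le> ln (real n + 2)"
proof -
  have Digamma_eq: "Digamma (real n + 2) = harm (Suc n) - euler_mascheroni"
    using Digamma_of_nat[of "Suc n", where 'a = real] by (simp add: add_ac)
  show "ln (real n + 2) - 1 / (2 * (real n + 1)) \<le> Digamma (real n + 2)"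
    using euler_mascheroni_upper[of n] unfolding Digamma_eq by (simp add: add_ac)
  have "harm (Suc n) - ln (real n + 2) + 1 / (4 + 2 * real n) \<le> euler_mascheroni"
    using euler_mascheroni_lower[of n] by (simp add: add_ac)
  moreover have "0 \<le> 1 / (4 + 2 * real n)"
    by simp
  ultimately show "Digamma (real n + 2) \<le> ln (real n + 2)"
    unfolding Digamma_eq by linarith
qed

lemma Digamma_minus_ln_bound:
  fixes x :: real
  assumes x: "x \<ge> 3"
  shows "\<bar>Digamma x - ln x\<bar> \<le> ln (x + 1) - ln (x - 1) + 1 / (x - 2)"
proof -
  define n where "n = nat \<lfloor>x\<rfloor> - 2"
  have n_le: "real n + 2 \<le> x" and n_gt: "x < real n + 3"
    using x unfolding n_def by linarith+
  have "ln (real n + 2) - 1 / (2 * (real n + 1)) \<le> Digamma x"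
    using Digamma_nat_plus_two_bounds(1)[of n] Digamma_real_mono[OF _ n_le] by simp
  moreover have "Digamma x \<le> ln (real n + 3)"
    using Digamma_nat_plus_two_bounds(2)[of "Suc n"] Digamma_real_mono[of x "real n + 3"] n_gt x
    by (simp add: add_ac)
  moreover have "ln (x - 1) \<le> ln (real n + 2)" "ln (real n + 3) \<le> ln (x + 1)"
    "ln (x - 1) \<le> ln x" "ln x \<le> ln (x + 1)"
    using n_le n_gt x by simp_all
  moreover have "1 / (2 * (real n + 1)) \<le> 1 / (x - 2)"
    using n_gt x by (intro divide_left_mono) auto
  moreover have "0 \<le> 1 / (x - 2)"
    using x by simp
  ultimately show ?thesis
    unfolding abs_le_iff by linarith
qed

lemma Digamma_minus_ln_bigo: "(\<lambda>x. Digamma x - ln x) \<in> O[at_top](\<lambda>x::real. 1 / x)"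
proof -
  have "eventually (\<lambda>x::real.
      norm (Digamma x - ln x) \<le> 1 * norm (ln (x + 1) - ln (x - 1) + 1 / (x - 2))) at_top"
    using eventually_ge_at_top[of "3::real"]
    by eventually_elim (use Digamma_minus_ln_bound in auto)
  then have "(\<lambda>x::real. Digamma x - ln x) \<in> O[at_top](\<lambda>x. ln (x + 1) - ln (x - 1) + 1 / (x - 2))"
    by (intro bigoI)
  also have "(\<lambda>x::real. ln (x + 1) - ln (x - 1) + 1 / (x - 2)) \<in> O[at_top](\<lambda>x. 1 / x)"
    by real_asymp
  finally show ?thesis .
qed

lemma Digamma_plus1_minus_ln_bigo: "(\<lambda>x. Digamma (x + 1) - ln x) \<in> O[at_top](\<lambda>x::real. 1 / x)"
proof -
  have "(\<lambda>x::real. (Digamma x - ln x) + 1 / x) \<in> O[at_top](\<lambda>x::real. 1 / x)"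
    using Digamma_minus_ln_bigo by (rule sum_in_bigo) simp
  moreover have "eventually (\<lambda>x::real. (Digamma x - ln x) + 1 / x = Digamma (x + 1) - ln x) at_top"
    using eventually_gt_at_top[of "0::real"] by eventually_elim (simp add: Digamma_plus1)
  ultimately show ?thesis
    using landau_o.big.in_cong by fast
qed

lemma asymp_expansion_at_right_0_iff_at_top:
  "asymp_expansion (at_right 0) f a (\<lambda>n x. complex_of_real (x ^ n)) N \<longleftrightarrow>
   asymp_expansion at_top (\<lambda>x. f (1 / x)) a (\<lambda>n x. complex_of_real (1 / x ^ n)) N"
  unfolding at_right_to_top asymp_expansion_filtermap
  by (simp add: inverse_eq_divide power_one_over)

lemma asymp_expansion_ln_scale_iff:
  fixes f g :: "real \<Rightarrow> complex"
  assumes fg: "\<forall>x>1. g x = f (1 / ln x)"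
  shows "asymp_expansion at_top g a (\<lambda>n x. complex_of_real (1 / ln x ^ n)) N \<longleftrightarrow>
         asymp_expansion at_top (\<lambda>x. f (1 / x)) a (\<lambda>n x. complex_of_real (1 / x ^ n)) N"
proof -
  have "eventually (\<lambda>y. g (exp y) = f (1 / y)) at_top"
    using eventually_gt_at_top[of "0::real"] by eventually_elim (simp add: fg)
  then show ?thesis
    by (subst filtermap_exp_at_top [symmetric])
      (simp add: asymp_expansion_filtermap asymp_expansion_cong)
qed

theorem proposition7p5:
  fixes f g :: "real \<Rightarrow> complex" and L :: "real \<Rightarrow> real"
    and a :: "nat \<Rightarrow> complex" and N :: nat
  assumes N_pos: "N > 0"
    and fg: "\<forall>x>1. g x = f (1 / ln x)"
    and L: "(\<lambda>x. L x - ln x) \<in> o[at_top](\<lambda>x. ln x powr (2 - real N))"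
  defines "E1 \<equiv> asymp_expansion (at_right 0) f a (\<lambda>n x. complex_of_real (x ^ n)) N"
    and "E2 \<equiv> asymp_expansion at_top (\<lambda>x. f (1 / x)) a (\<lambda>n x. complex_of_real (1 / x ^ n)) N"
    and "E3 \<equiv> asymp_expansion at_top g a (\<lambda>n x. complex_of_real (1 / L x ^ n)) N"
    and "E4 \<equiv> asymp_expansion at_top g a (\<lambda>n x. complex_of_real (1 / ln x ^ n)) N"
    and "E5 \<equiv> asymp_expansion at_top g a
               (\<lambda>n x. complex_of_real (1 / (harm_real x - euler_mascheroni) ^ n)) N"
    and "E6 \<equiv> asymp_expansion at_top g a (\<lambda>n x. complex_of_real (1 / Digamma x ^ n)) N"
  shows "(E1 \<longleftrightarrow> E2) \<and> (E2 \<longleftrightarrow> E3) \<and> (E3 \<longleftrightarrow> E4) \<and> (E4 \<longleftrightarrow> E5) \<and> (E5 \<longleftrightarrow> E6)"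
proof -
  have inverse_smallo: "(\<lambda>x::real. 1 / x) \<in> o[at_top](\<lambda>x. ln x powr (2 - real N))"
    by real_asymp
  have "E1 \<longleftrightarrow> E2"
    unfolding E1_def E2_def by (rule asymp_expansion_at_right_0_iff_at_top)
  moreover have "E4 \<longleftrightarrow> E2"
    unfolding E4_def E2_def by (rule asymp_expansion_ln_scale_iff[OF fg])
  moreover have "E3 \<longleftrightarrow> E4"
    unfolding E3_def E4_def by (rule asymp_expansion_inverse_powers_iff[OF ln_at_top N_pos L])
  moreover have "E5 \<longleftrightarrow> E4"
    unfolding E5_def E4_def harm_real_def
    using asymp_expansion_inverse_powers_iff[OF ln_at_top N_pos
        landau_o.big_small_trans[OF Digamma_plus1_minus_ln_bigo inverse_smallo]]
    by simp
  moreover have "E6 \<longleftrightarrow> E4"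
    unfolding E6_def E4_def
    by (rule asymp_expansion_inverse_powers_iff[OF ln_at_top N_pos
        landau_o.big_small_trans[OF Digamma_minus_ln_bigo inverse_smallo]])
  ultimately show ?thesis
    by blast
qed

end
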